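(* Let $S$ be an $E$-solid locally inverse semigroup, $\rho$ an inverse semigroup congruence on $S$ whose idempotent classes are completely simple subsemigroups, $T=S/\rho$, and let $\mathcal C$ be the derived semigroupoid. Let $(\alpha,s,\beta)\in T\times S\times T$. (1) $(\alpha,s,\beta)$ is an arrow of $\mathcal C$ if and only if $\alpha\,\mathcal R\,\beta$ in $T$ and $s\rho\ge\alpha^{-1}\beta$. (2) If $(\alpha,s,\beta)$ is an arrow of $\mathcal C$ then $s\rho(s\rho)^{-1}\ge\alpha^{-1}\alpha$ and $(s\rho)^{-1}s\rho\ge\beta^{-1}\beta$ in $T$. (3) If $(\alpha,s,\beta)$ is an arrow of $\mathcal C$ then the following are equivalent: (a) $s\rho=\alpha^{-1}\beta$; (b) $s\rho(s\rho)^{-1}=\alpha^{-1}\alpha$; (c) $(s\rho)^{-1}s\rho=\beta^{-1}\beta$.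
   Context: The derived semigroupoid $\mathcal C$ has object set $T$ and, for $\alpha,\beta\in T$, arrow set $\mathcal C(\alpha,\beta)=\{(\alpha,s,\beta)\in T\times S\times T:\alpha\cdot s\rho=\beta,\ \beta\cdot(s\rho)^{-1}=\alpha\}$, with composition $(\alpha,s,\beta)\circ(\beta,t,\gamma)=(\alpha,st,\gamma)$. The order on $T$ is the natural partial order of the inverse semigroup $T$; $\mathcal R$ is Green's relation. Locally inverse: regular with every $eSe$ inverse; $E$-solid: idempotent-generated subsemigroup completely regular. *)

theory Defs
  imports Main
begin

definition closed_on :: "'b set \<Rightarrow> ('b \<Rightarrow> 'b \<Rightarrow> 'b) \<Rightarrow> bool" where
  "closed_on A f \<longleftrightarrow> (\<forall>a\<in>A. \<forall>b\<in>A. f a b \<in> A)"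

definition is_inv :: "'b set \<Rightarrow> ('b \<Rightarrow> 'b \<Rightarrow> 'b) \<Rightarrow> 'b \<Rightarrow> 'b \<Rightarrow> bool" where
  "is_inv A f a x \<longleftrightarrow> x \<in> A \<and> f (f a x) a = a \<and> f (f x a) x = x"

definition regular_on :: "'b set \<Rightarrow> ('b \<Rightarrow> 'b \<Rightarrow> 'b) \<Rightarrow> bool" where
  "regular_on A f \<longleftrightarrow> (\<forall>a\<in>A. \<exists>x\<in>A. f (f a x) a = a)"

definition inverse_semigroup_on :: "'b set \<Rightarrow> ('b \<Rightarrow> 'b \<Rightarrow> 'b) \<Rightarrow> bool" where
  "inverse_semigroup_on A f \<longleftrightarrow> closed_on A f \<and> (\<forall>a\<in>A. \<exists>!x. is_inv A f a x)"

definition inv_on :: "'b set \<Rightarrow> ('b \<Rightarrow> 'b \<Rightarrow> 'b) \<Rightarrow> 'b \<Rightarrow> 'b" where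
  "inv_on A f a = (THE x. is_inv A f a x)"

definition nat_le :: "'b set \<Rightarrow> ('b \<Rightarrow> 'b \<Rightarrow> 'b) \<Rightarrow> 'b \<Rightarrow> 'b \<Rightarrow> bool" where
  "nat_le A f a b \<longleftrightarrow> (\<exists>e\<in>A. f e e = e \<and> a = f e b)"

text \<open>Green's R: a A^1 = b A^1.\<close>
definition greenR :: "'b set \<Rightarrow> ('b \<Rightarrow> 'b \<Rightarrow> 'b) \<Rightarrow> 'b \<Rightarrow> 'b \<Rightarrow> bool" where
  "greenR A f a b \<longleftrightarrow> (a = b \<or> (\<exists>x\<in>A. a = f b x)) \<and> (b = a \<or> (\<exists>x\<in>A. b = f a x))"

definition completely_regular_on :: "'b set \<Rightarrow> ('b \<Rightarrow> 'b \<Rightarrow> 'b) \<Rightarrow> bool" where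
  "completely_regular_on A f \<longleftrightarrow>
     (\<forall>a\<in>A. \<exists>x\<in>A. f (f a x) a = a \<and> f (f x a) x = x \<and> f a x = f x a)"

definition simple_on :: "'b set \<Rightarrow> ('b \<Rightarrow> 'b \<Rightarrow> 'b) \<Rightarrow> bool" where
  "simple_on A f \<longleftrightarrow> (\<forall>I. I \<noteq> {} \<and> I \<subseteq> A \<and> (\<forall>a\<in>A. \<forall>i\<in>I. f a i \<in> I \<and> f i a \<in> I) \<longrightarrow> I = A)"

definition primitive_idem :: "'b set \<Rightarrow> ('b \<Rightarrow> 'b \<Rightarrow> 'b) \<Rightarrow> 'b \<Rightarrow> bool" where
  "primitive_idem A f e \<longleftrightarrow> e \<in> A \<and> f e e = e \<and>
     (\<forall>g\<in>A. f g g = g \<and> f e g = g \<and> f g e = g \<longrightarrow> g = e)"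

definition completely_simple_on :: "'b set \<Rightarrow> ('b \<Rightarrow> 'b \<Rightarrow> 'b) \<Rightarrow> bool" where
  "completely_simple_on A f \<longleftrightarrow> A \<noteq> {} \<and> closed_on A f \<and> simple_on A f \<and> (\<exists>e. primitive_idem A f e)"

definition locally_inverse :: "'a::semigroup_mult itself \<Rightarrow> bool" where
  "locally_inverse _ \<longleftrightarrow> regular_on (UNIV::'a set) (*) \<and>
     (\<forall>e::'a. e * e = e \<longrightarrow> inverse_semigroup_on {e * s * e | s. True} (*))"

inductive_set idem_gen :: "'a::semigroup_mult set" where
  idem: "e * e = e \<Longrightarrow> e \<in> idem_gen"
| mult: "a \<in> idem_gen \<Longrightarrow> b \<in> idem_gen \<Longrightarrow> a * b \<in> idem_gen"

definition E_solid :: "'a::semigroup_mult itself \<Rightarrow> bool" where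
  "E_solid _ \<longleftrightarrow> completely_regular_on (idem_gen :: 'a set) (*)"

definition congruence :: "('a::semigroup_mult) rel \<Rightarrow> bool" where
  "congruence \<rho> \<longleftrightarrow> equiv UNIV \<rho> \<and>
     (\<forall>a b c. (a, b) \<in> \<rho> \<longrightarrow> (c * a, c * b) \<in> \<rho> \<and> (a * c, b * c) \<in> \<rho>)"

definition quot :: "('a::semigroup_mult) rel \<Rightarrow> 'a set set" where
  "quot \<rho> = UNIV // \<rho>"

definition cls :: "('a::semigroup_mult) rel \<Rightarrow> 'a \<Rightarrow> 'a set" where
  "cls \<rho> s = \<rho> `` {s}"

definition qmult :: "('a::semigroup_mult) rel \<Rightarrow> 'a set \<Rightarrow> 'a set \<Rightarrow> 'a set" where
  "qmult \<rho> A B = \<rho> `` {(SOME a. a \<in> A) * (SOME b. b \<in> B)}"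

definition qinv :: "('a::semigroup_mult) rel \<Rightarrow> 'a set \<Rightarrow> 'a set" where
  "qinv \<rho> A = inv_on (quot \<rho>) (qmult \<rho>) A"

definition inverse_congruence :: "('a::semigroup_mult) rel \<Rightarrow> bool" where
  "inverse_congruence \<rho> \<longleftrightarrow> congruence \<rho> \<and> inverse_semigroup_on (quot \<rho>) (qmult \<rho>)"

definition idem_classes_completely_simple :: "('a::semigroup_mult) rel \<Rightarrow> bool" where
  "idem_classes_completely_simple \<rho> \<longleftrightarrow>
     (\<forall>A\<in>quot \<rho>. qmult \<rho> A A = A \<longrightarrow> completely_simple_on A (*))"

definition is_arrow :: "('a::semigroup_mult) rel \<Rightarrow> 'a set \<Rightarrow> 'a \<Rightarrow> 'a set \<Rightarrow> bool" where
  "is_arrow \<rho> \<alpha> s \<beta> \<longleftrightarrow> \<alpha> \<in> quot \<rho> \<and> \<beta> \<in> quot \<rho> \<and>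
     qmult \<rho> \<alpha> (cls \<rho> s) = \<beta> \<and> qmult \<rho> \<beta> (qinv \<rho> (cls \<rho> s)) = \<alpha>"

end

theory Submission
  imports Defs
begin

text \<open>
  Writing \<open>x = s\<rho>\<close>, the arrow conditions \<open>\<alpha>x = \<beta>\<close>, \<open>\<beta>x\<^sup>-\<^sup>1 = \<alpha>\<close> are invariant under
  \<open>(\<alpha>, x, \<beta>) \<mapsto> (\<beta>, x\<^sup>-\<^sup>1, \<alpha>)\<close>, which exchanges the two halves of each claim, so only one
  half ever has to be proved. If \<open>\<alpha> \<R> \<beta>\<close> then \<open>\<beta>\<beta>\<^sup>-\<^sup>1\<alpha> = \<alpha>\<close>, hence \<open>\<alpha>\<^sup>-\<^sup>1\<beta>(\<alpha>\<^sup>-\<^sup>1\<beta>)\<^sup>-\<^sup>1 = \<alpha>\<^sup>-\<^sup>1\<alpha>\<close>,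
  and \<open>\<alpha>\<^sup>-\<^sup>1\<beta> \<le> x\<close> becomes \<open>\<alpha>\<^sup>-\<^sup>1\<beta> = \<alpha>\<^sup>-\<^sup>1\<alpha>x\<close>; multiplying by \<open>\<alpha>\<close> on the left gives \<open>\<beta> = \<alpha>x\<close>.
\<close>

lemma greenR_sym: "greenR A f a b \<Longrightarrow> greenR A f b a"
  unfolding greenR_def by blast

locale inverse_semigroup =
  fixes A :: "'b set" and f :: "'b \<Rightarrow> 'b \<Rightarrow> 'b" (infixl \<open>\<cdot>\<close> 70)
  assumes closed [simp]: "a \<in> A \<Longrightarrow> b \<in> A \<Longrightarrow> a \<cdot> b \<in> A"
    and assoc [simp]: "a \<in> A \<Longrightarrow> b \<in> A \<Longrightarrow> c \<in> A \<Longrightarrow> a \<cdot> b \<cdot> c = a \<cdot> (b \<cdot> c)"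
    and unique_inverse: "a \<in> A \<Longrightarrow> \<exists>!x. is_inv A f a x"
begin

abbreviation inverse (\<open>_\<^sup>-\<^sup>1\<close> [1000] 999) where "a\<^sup>-\<^sup>1 \<equiv> inv_on A f a"

lemma is_inv_inverse: "a \<in> A \<Longrightarrow> is_inv A f a (a\<^sup>-\<^sup>1)"
  unfolding inv_on_def by (rule theI') (rule unique_inverse)

lemma inverse_closed [simp]: "a \<in> A \<Longrightarrow> a\<^sup>-\<^sup>1 \<in> A"
  using is_inv_inverse[of a] unfolding is_inv_def by simp

lemma mult_inverse_mult [simp]: "a \<in> A \<Longrightarrow> a \<cdot> (a\<^sup>-\<^sup>1 \<cdot> a) = a"
  and inverse_mult_inverse [simp]: "a \<in> A \<Longrightarrow> a\<^sup>-\<^sup>1 \<cdot> (a \<cdot> a\<^sup>-\<^sup>1) = a\<^sup>-\<^sup>1"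
  using is_inv_inverse[of a] unfolding is_inv_def by simp_all

lemma idem_absorb_left: "e \<in> A \<Longrightarrow> e \<cdot> e = e \<Longrightarrow> z \<in> A \<Longrightarrow> e \<cdot> (e \<cdot> z) = e \<cdot> z"
  by (metis assoc)

lemma mult_inverse_mult_left [simp]: "a \<in> A \<Longrightarrow> z \<in> A \<Longrightarrow> a \<cdot> (a\<^sup>-\<^sup>1 \<cdot> (a \<cdot> z)) = a \<cdot> z"
  and inverse_mult_inverse_left [simp]: "a \<in> A \<Longrightarrow> z \<in> A \<Longrightarrow> a\<^sup>-\<^sup>1 \<cdot> (a \<cdot> (a\<^sup>-\<^sup>1 \<cdot> z)) = a\<^sup>-\<^sup>1 \<cdot> z"
  by (metis assoc closed mult_inverse_mult inverse_closed inverse_mult_inverse)+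

lemma inverse_unique:
  assumes "a \<in> A" "x \<in> A" "a \<cdot> (x \<cdot> a) = a" "x \<cdot> (a \<cdot> x) = x"
  shows "a\<^sup>-\<^sup>1 = x"
proof -
  have "is_inv A f a x" unfolding is_inv_def using assms by simp
  then show ?thesis unfolding inv_on_def by (rule the1_equality[OF unique_inverse[OF \<open>a \<in> A\<close>]])
qed

lemma inverse_inverse [simp]: "a \<in> A \<Longrightarrow> (a\<^sup>-\<^sup>1)\<^sup>-\<^sup>1 = a"
  by (rule inverse_unique) auto

lemma inverse_idem: "e \<in> A \<Longrightarrow> e \<cdot> e = e \<Longrightarrow> e\<^sup>-\<^sup>1 = e"
  by (rule inverse_unique) auto

lemma idem_mult_idem:
  assumes e: "e \<in> A" "e \<cdot> e = e" and g: "g \<in> A" "g \<cdot> g = g"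
  shows "e \<cdot> g \<cdot> (e \<cdot> g) = e \<cdot> g"
proof -
  define x where "x = (e \<cdot> g)\<^sup>-\<^sup>1"
  have x: "x \<in> A" using e g by (simp add: x_def)
  have "e \<cdot> g \<cdot> (x \<cdot> (e \<cdot> g)) = e \<cdot> g" using e g by (simp add: x_def)
  then have x1: "e \<cdot> (g \<cdot> (x \<cdot> (e \<cdot> g))) = e \<cdot> g" using e g x by simp
  have x2: "x \<cdot> (e \<cdot> (g \<cdot> (x \<cdot> z))) = x \<cdot> z" if "z \<in> A" for z
    using inverse_mult_inverse_left[of "e \<cdot> g" z] e g that by (simp add: x_def)
  \<comment> \<open>\<open>gxe\<close> is an inverse of \<open>eg\<close> as well, so \<open>x = gxe\<close> is idempotent, and so is \<open>eg = x\<^sup>-\<^sup>1\<close>.\<close>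
  have "(e \<cdot> g)\<^sup>-\<^sup>1 = g \<cdot> (x \<cdot> e)"
    by (rule inverse_unique) (use e g x x1 x2 in \<open>simp_all add: idem_absorb_left\<close>)
  then have gxe: "g \<cdot> (x \<cdot> e) = x" by (simp add: x_def)
  have "x \<cdot> x = x"
  proof -
    have "x \<cdot> x = g \<cdot> (x \<cdot> e) \<cdot> (g \<cdot> (x \<cdot> e))" by (simp only: gxe)
    also have "\<dots> = g \<cdot> (x \<cdot> e)" using x2 e g x by simp
    also have "\<dots> = x" by (rule gxe)
    finally show ?thesis .
  qed
  then have "e \<cdot> g = x" using inverse_idem[OF x] e g by (metis closed inverse_inverse x_def)
  then show ?thesis using \<open>x \<cdot> x = x\<close> by simp
qed

lemma idem_commute:
  assumes e: "e \<in> A" "e \<cdot> e = e" and g: "g \<in> A" "g \<cdot> g = g"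
  shows "e \<cdot> g = g \<cdot> e"
proof -
  have eg: "e \<cdot> (g \<cdot> (e \<cdot> g)) = e \<cdot> g" and ge: "g \<cdot> (e \<cdot> (g \<cdot> e)) = g \<cdot> e"
    using idem_mult_idem[OF e g] idem_mult_idem[OF g e] e g by simp_all
  have "(e \<cdot> g)\<^sup>-\<^sup>1 = g \<cdot> e"
    by (rule inverse_unique) (use e g eg ge in \<open>simp_all add: idem_absorb_left\<close>)
  moreover have "(e \<cdot> g)\<^sup>-\<^sup>1 = e \<cdot> g"
    by (rule inverse_idem) (use e g eg in simp_all)
  ultimately show ?thesis by simp
qed

lemma inverse_mult: "a \<in> A \<Longrightarrow> b \<in> A \<Longrightarrow> (a \<cdot> b)\<^sup>-\<^sup>1 = b\<^sup>-\<^sup>1 \<cdot> a\<^sup>-\<^sup>1"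
proof (rule inverse_unique)
  assume a: "a \<in> A" and b: "b \<in> A"
  have c: "b \<cdot> b\<^sup>-\<^sup>1 \<cdot> (a\<^sup>-\<^sup>1 \<cdot> a) = a\<^sup>-\<^sup>1 \<cdot> a \<cdot> (b \<cdot> b\<^sup>-\<^sup>1)"
    by (rule idem_commute) (use a b in simp_all)
  show "a \<cdot> b \<in> A" "b\<^sup>-\<^sup>1 \<cdot> a\<^sup>-\<^sup>1 \<in> A" using a b by auto
  have "a \<cdot> b \<cdot> (b\<^sup>-\<^sup>1 \<cdot> a\<^sup>-\<^sup>1 \<cdot> (a \<cdot> b)) = a \<cdot> (b \<cdot> b\<^sup>-\<^sup>1 \<cdot> (a\<^sup>-\<^sup>1 \<cdot> a)) \<cdot> b" using a b by simp
  also have "\<dots> = a \<cdot> b" unfolding c using a b by simp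
  finally show "a \<cdot> b \<cdot> (b\<^sup>-\<^sup>1 \<cdot> a\<^sup>-\<^sup>1 \<cdot> (a \<cdot> b)) = a \<cdot> b" .
  have "b\<^sup>-\<^sup>1 \<cdot> a\<^sup>-\<^sup>1 \<cdot> (a \<cdot> b \<cdot> (b\<^sup>-\<^sup>1 \<cdot> a\<^sup>-\<^sup>1)) = b\<^sup>-\<^sup>1 \<cdot> (a\<^sup>-\<^sup>1 \<cdot> a \<cdot> (b \<cdot> b\<^sup>-\<^sup>1)) \<cdot> a\<^sup>-\<^sup>1"
    using a b by simp
  also have "\<dots> = b\<^sup>-\<^sup>1 \<cdot> a\<^sup>-\<^sup>1" unfolding c[symmetric] using a b by simp
  finally show "b\<^sup>-\<^sup>1 \<cdot> a\<^sup>-\<^sup>1 \<cdot> (a \<cdot> b \<cdot> (b\<^sup>-\<^sup>1 \<cdot> a\<^sup>-\<^sup>1)) = b\<^sup>-\<^sup>1 \<cdot> a\<^sup>-\<^sup>1" .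
qed

lemma nat_le_idem_mult: "e \<in> A \<Longrightarrow> e \<cdot> e = e \<Longrightarrow> nat_le A f (e \<cdot> x) x"
  unfolding nat_le_def by blast

lemma idem_commute_mult_inverse:
  assumes "e \<in> A" "e \<cdot> e = e" "x \<in> A" "z \<in> A"
  shows "x \<cdot> (x\<^sup>-\<^sup>1 \<cdot> (e \<cdot> z)) = e \<cdot> (x \<cdot> (x\<^sup>-\<^sup>1 \<cdot> z))"
proof -
  have "x \<cdot> x\<^sup>-\<^sup>1 \<cdot> e = e \<cdot> (x \<cdot> x\<^sup>-\<^sup>1)"
    by (rule idem_commute) (use assms in simp_all)
  then have "x \<cdot> x\<^sup>-\<^sup>1 \<cdot> e \<cdot> z = e \<cdot> (x \<cdot> x\<^sup>-\<^sup>1) \<cdot> z" by simp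
  then show ?thesis using assms by simp
qed

lemma nat_le_eq_mult:
  assumes "nat_le A f y x" "x \<in> A"
  shows "y = y \<cdot> y\<^sup>-\<^sup>1 \<cdot> x"
proof -
  obtain e where e: "e \<in> A" "e \<cdot> e = e" and y: "y = e \<cdot> x"
    using assms(1) unfolding nat_le_def by blast
  then show ?thesis
    using assms(2) by (simp add: inverse_mult inverse_idem idem_commute_mult_inverse idem_absorb_left)
qed

lemma nat_le_inverse:
  assumes "nat_le A f y x" "x \<in> A"
  shows "nat_le A f (y\<^sup>-\<^sup>1) (x\<^sup>-\<^sup>1)"
proof -
  obtain e where e: "e \<in> A" "e \<cdot> e = e" and y: "y = e \<cdot> x"
    using assms(1) unfolding nat_le_def by blast
  have "e \<cdot> (x \<cdot> x\<^sup>-\<^sup>1) = x \<cdot> x\<^sup>-\<^sup>1 \<cdot> e"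
    by (rule idem_commute) (use e assms(2) in simp_all)
  then have "y\<^sup>-\<^sup>1 = x\<^sup>-\<^sup>1 \<cdot> e \<cdot> x \<cdot> x\<^sup>-\<^sup>1"
    using e assms(2) by (simp add: y inverse_mult inverse_idem)
  moreover have "x\<^sup>-\<^sup>1 \<cdot> e \<cdot> x \<cdot> (x\<^sup>-\<^sup>1 \<cdot> e \<cdot> x) = x\<^sup>-\<^sup>1 \<cdot> e \<cdot> x"
    using e assms(2) by (simp add: idem_commute_mult_inverse idem_absorb_left)
  ultimately show ?thesis
    unfolding nat_le_def using e assms(2) by (intro bexI[of _ "x\<^sup>-\<^sup>1 \<cdot> e \<cdot> x"]) simp_all
qed

definition arrow :: "'b \<Rightarrow> 'b \<Rightarrow> 'b \<Rightarrow> bool" where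
  "arrow a x b \<longleftrightarrow> a \<cdot> x = b \<and> b \<cdot> x\<^sup>-\<^sup>1 = a"

lemma arrow_inverse: "x \<in> A \<Longrightarrow> arrow a x b \<Longrightarrow> arrow b (x\<^sup>-\<^sup>1) a"
  unfolding arrow_def by simp

lemma greenR_mult_inverse_mult:
  "a \<in> A \<Longrightarrow> b \<in> A \<Longrightarrow> greenR A f a b \<Longrightarrow> b \<cdot> (b\<^sup>-\<^sup>1 \<cdot> a) = a"
  unfolding greenR_def by auto

lemma arrow_imp_greenR: "x \<in> A \<Longrightarrow> arrow a x b \<Longrightarrow> greenR A f a b"
  unfolding arrow_def greenR_def by (metis inverse_closed)

lemma arrow_imp_nat_le: "a \<in> A \<Longrightarrow> x \<in> A \<Longrightarrow> arrow a x b \<Longrightarrow> nat_le A f (a\<^sup>-\<^sup>1 \<cdot> b) x"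
  unfolding arrow_def using nat_le_idem_mult[of "a\<^sup>-\<^sup>1 \<cdot> a" x] by auto

lemma greenR_nat_le_imp_mult_eq:
  assumes a: "a \<in> A" and b: "b \<in> A" and x: "x \<in> A"
    and R: "greenR A f a b" and le: "nat_le A f (a\<^sup>-\<^sup>1 \<cdot> b) x"
  shows "a \<cdot> x = b"
proof -
  have "(a\<^sup>-\<^sup>1 \<cdot> b) \<cdot> (a\<^sup>-\<^sup>1 \<cdot> b)\<^sup>-\<^sup>1 = a\<^sup>-\<^sup>1 \<cdot> (b \<cdot> (b\<^sup>-\<^sup>1 \<cdot> a))"
    using a b by (simp add: inverse_mult)
  also have "\<dots> = a\<^sup>-\<^sup>1 \<cdot> a"
    using greenR_mult_inverse_mult[OF a b R] by simp
  finally have "a\<^sup>-\<^sup>1 \<cdot> b = a\<^sup>-\<^sup>1 \<cdot> a \<cdot> x"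
    using nat_le_eq_mult[OF le x] by simp
  then have "a \<cdot> (a\<^sup>-\<^sup>1 \<cdot> b) = a \<cdot> x" using a x by simp
  then show ?thesis using greenR_mult_inverse_mult[OF b a greenR_sym[OF R]] by simp
qed

lemma arrow_iff_greenR_nat_le:
  assumes a: "a \<in> A" and b: "b \<in> A" and x: "x \<in> A"
  shows "arrow a x b \<longleftrightarrow> greenR A f a b \<and> nat_le A f (a\<^sup>-\<^sup>1 \<cdot> b) x"
proof
  assume "greenR A f a b \<and> nat_le A f (a\<^sup>-\<^sup>1 \<cdot> b) x"
  then have R: "greenR A f a b" and le: "nat_le A f (a\<^sup>-\<^sup>1 \<cdot> b) x" by blast+
  have "nat_le A f (b\<^sup>-\<^sup>1 \<cdot> a) (x\<^sup>-\<^sup>1)"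
    using nat_le_inverse[OF le x] a b by (simp add: inverse_mult)
  then have "b \<cdot> x\<^sup>-\<^sup>1 = a"
    using greenR_nat_le_imp_mult_eq[OF b a _ greenR_sym[OF R]] x by simp
  then show "arrow a x b"
    unfolding arrow_def using greenR_nat_le_imp_mult_eq[OF a b x R le] by simp
qed (use a x arrow_imp_greenR arrow_imp_nat_le in blast)

lemma arrow_nat_le_mult_inverse:
  assumes "a \<in> A" "x \<in> A" "arrow a x b"
  shows "nat_le A f (a\<^sup>-\<^sup>1 \<cdot> a) (x \<cdot> x\<^sup>-\<^sup>1)"
proof -
  have "a \<cdot> (x \<cdot> x\<^sup>-\<^sup>1) = a" using assms unfolding arrow_def by (metis assoc inverse_closed)
  then show ?thesis
    unfolding nat_le_def using assms(1,2) by (intro bexI[of _ "a\<^sup>-\<^sup>1 \<cdot> a"]) simp_all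
qed

lemma arrow_nat_le_inverse_mult:
  "b \<in> A \<Longrightarrow> x \<in> A \<Longrightarrow> arrow a x b \<Longrightarrow> nat_le A f (b\<^sup>-\<^sup>1 \<cdot> b) (x\<^sup>-\<^sup>1 \<cdot> x)"
  using arrow_nat_le_mult_inverse[of b "x\<^sup>-\<^sup>1" a] arrow_inverse by simp

lemma arrow_eq_iff_mult_inverse:
  assumes "a \<in> A" "b \<in> A" "x \<in> A" "arrow a x b"
  shows "x = a\<^sup>-\<^sup>1 \<cdot> b \<longleftrightarrow> x \<cdot> x\<^sup>-\<^sup>1 = a\<^sup>-\<^sup>1 \<cdot> a"
proof
  assume "x = a\<^sup>-\<^sup>1 \<cdot> b"
  moreover have "b \<cdot> (b\<^sup>-\<^sup>1 \<cdot> a) = a"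
    using assms arrow_imp_greenR greenR_mult_inverse_mult by blast
  ultimately show "x \<cdot> x\<^sup>-\<^sup>1 = a\<^sup>-\<^sup>1 \<cdot> a" using assms(1,2) by (simp add: inverse_mult)
next
  assume "x \<cdot> x\<^sup>-\<^sup>1 = a\<^sup>-\<^sup>1 \<cdot> a"
  then have "x = a\<^sup>-\<^sup>1 \<cdot> a \<cdot> x" using assms(3) by (metis assoc inverse_closed mult_inverse_mult)
  then show "x = a\<^sup>-\<^sup>1 \<cdot> b" using assms(1,3,4) unfolding arrow_def by simp
qed

lemma arrow_eq_iff_inverse_mult:
  assumes "a \<in> A" "b \<in> A" "x \<in> A" "arrow a x b"
  shows "x = a\<^sup>-\<^sup>1 \<cdot> b \<longleftrightarrow> x\<^sup>-\<^sup>1 \<cdot> x = b\<^sup>-\<^sup>1 \<cdot> b"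
proof -
  have "x = a\<^sup>-\<^sup>1 \<cdot> b \<longleftrightarrow> x\<^sup>-\<^sup>1 = b\<^sup>-\<^sup>1 \<cdot> a"
    using assms(1-3) by (metis closed inverse_closed inverse_inverse inverse_mult)
  also have "\<dots> \<longleftrightarrow> x\<^sup>-\<^sup>1 \<cdot> x = b\<^sup>-\<^sup>1 \<cdot> b"
    using arrow_eq_iff_mult_inverse[of b a "x\<^sup>-\<^sup>1"] arrow_inverse assms by simp
  finally show ?thesis .
qed

end

lemma congruence_mult:
  "congruence \<rho> \<Longrightarrow> (a, a') \<in> \<rho> \<Longrightarrow> (b, b') \<in> \<rho> \<Longrightarrow> (a * b, a' * b') \<in> \<rho>"
  unfolding congruence_def equiv_def by (meson transE)

lemma cls_in_quot: "congruence \<rho> \<Longrightarrow> cls \<rho> a \<in> quot \<rho>"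
  unfolding cls_def quot_def by (auto intro: quotientI)

lemma quot_cases:
  assumes "X \<in> quot \<rho>"
  obtains a where "X = cls \<rho> a"
  using assms unfolding cls_def quot_def by (auto elim: quotientE)

lemma qmult_cls:
  assumes \<rho>: "congruence \<rho>"
  shows "qmult \<rho> (cls \<rho> a) (cls \<rho> b) = cls \<rho> (a * b)"
proof -
  have equiv: "equiv UNIV \<rho>" using \<rho> unfolding congruence_def by blast
  have some_cls: "(c, SOME c'. c' \<in> cls \<rho> c) \<in> \<rho>" for c
    using someI[of "\<lambda>c'. c' \<in> cls \<rho> c" c] equiv_class_self[OF equiv] unfolding cls_def by blast
  have "(a * b, (SOME a'. a' \<in> cls \<rho> a) * (SOME b'. b' \<in> cls \<rho> b)) \<in> \<rho>"
    using congruence_mult[OF \<rho> some_cls some_cls] .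
  then show ?thesis unfolding qmult_def cls_def by (metis equiv equiv_class_eq)
qed

lemma inverse_semigroup_quot:
  assumes "inverse_congruence \<rho>"
  shows "inverse_semigroup (quot \<rho>) (qmult \<rho>)"
proof
  have \<rho>: "congruence \<rho>" and inv: "inverse_semigroup_on (quot \<rho>) (qmult \<rho>)"
    using assms unfolding inverse_congruence_def by auto
  fix X Y Z
  assume X: "X \<in> quot \<rho>" and Y: "Y \<in> quot \<rho>"
  then show "qmult \<rho> X Y \<in> quot \<rho>" "\<exists>!X'. is_inv (quot \<rho>) (qmult \<rho>) X X'"
    using inv unfolding inverse_semigroup_on_def closed_on_def by blast+
  assume "Z \<in> quot \<rho>"
  with X Y show "qmult \<rho> (qmult \<rho> X Y) Z = qmult \<rho> X (qmult \<rho> Y Z)"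
    by (elim quot_cases) (simp add: qmult_cls[OF \<rho>] mult.assoc)
qed

lemma is_arrow_iff_arrow:
  assumes "inverse_congruence \<rho>" "\<alpha> \<in> quot \<rho>" "\<beta> \<in> quot \<rho>"
  shows "is_arrow \<rho> \<alpha> s \<beta> \<longleftrightarrow> inverse_semigroup.arrow (quot \<rho>) (qmult \<rho>) \<alpha> (cls \<rho> s) \<beta>"
  using assms inverse_semigroup.arrow_def[OF inverse_semigroup_quot]
  unfolding is_arrow_def qinv_def by blast

theorem lemma5p1:
  fixes \<rho> :: "('a::semigroup_mult) rel" and \<alpha> \<beta> :: "'a set" and s :: 'a
  assumes "E_solid TYPE('a)" and "locally_inverse TYPE('a)"
    and "inverse_congruence \<rho>" and "idem_classes_completely_simple \<rho>"
    and "\<alpha> \<in> quot \<rho>" and "\<beta> \<in> quot \<rho>"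
  shows "(is_arrow \<rho> \<alpha> s \<beta> \<longleftrightarrow>
            greenR (quot \<rho>) (qmult \<rho>) \<alpha> \<beta> \<and>
            nat_le (quot \<rho>) (qmult \<rho>) (qmult \<rho> (qinv \<rho> \<alpha>) \<beta>) (cls \<rho> s))
       \<and> (is_arrow \<rho> \<alpha> s \<beta> \<longrightarrow>
            nat_le (quot \<rho>) (qmult \<rho>) (qmult \<rho> (qinv \<rho> \<alpha>) \<alpha>)
                   (qmult \<rho> (cls \<rho> s) (qinv \<rho> (cls \<rho> s))) \<and>
            nat_le (quot \<rho>) (qmult \<rho>) (qmult \<rho> (qinv \<rho> \<beta>) \<beta>)
                   (qmult \<rho> (qinv \<rho> (cls \<rho> s)) (cls \<rho> s)))
       \<and> (is_arrow \<rho> \<alpha> s \<beta> \<longrightarrow>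
            ((cls \<rho> s = qmult \<rho> (qinv \<rho> \<alpha>) \<beta> \<longleftrightarrow>
              qmult \<rho> (cls \<rho> s) (qinv \<rho> (cls \<rho> s)) = qmult \<rho> (qinv \<rho> \<alpha>) \<alpha>) \<and>
             (qmult \<rho> (cls \<rho> s) (qinv \<rho> (cls \<rho> s)) = qmult \<rho> (qinv \<rho> \<alpha>) \<alpha> \<longleftrightarrow>
              qmult \<rho> (qinv \<rho> (cls \<rho> s)) (cls \<rho> s) = qmult \<rho> (qinv \<rho> \<beta>) \<beta>)))"
proof -
  interpret T: inverse_semigroup "quot \<rho>" "qmult \<rho>"
    using inverse_semigroup_quot assms(3) .
  have x: "cls \<rho> s \<in> quot \<rho>"
    using assms(3) cls_in_quot unfolding inverse_congruence_def by blast
  have qinv_eq: "qinv \<rho> X = inv_on (quot \<rho>) (qmult \<rho>) X" for X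
    unfolding qinv_def ..
  show ?thesis
    unfolding is_arrow_iff_arrow[OF assms(3,5,6)] qinv_eq
    using T.arrow_iff_greenR_nat_le[OF assms(5,6) x] T.arrow_nat_le_mult_inverse[OF assms(5) x]
      T.arrow_nat_le_inverse_mult[OF assms(6) x] T.arrow_eq_iff_mult_inverse[OF assms(5,6) x]
      T.arrow_eq_iff_inverse_mult[OF assms(5,6) x]
    by blast
qed

end
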